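(* Let $\mathfrak{R}$ be an alternative ring with a nontrivial idempotent $e_1$ and Peirce decomposition $\mathfrak{R}=\mathfrak{R}_{11}\oplus\mathfrak{R}_{12}\oplus\mathfrak{R}_{21}\oplus\mathfrak{R}_{22}$, satisfying: (i) if $a_{11}\in\mathfrak{R}_{11}$, $a_{22}\in\mathfrak{R}_{22}$ and $[a_{11}+a_{22},\mathfrak{R}_{12}]=0$, then $a_{11}+a_{22}\in\mathcal{Z}(\mathfrak{R})$; (ii) if $a_{11}\in\mathfrak{R}_{11}$, $a_{22}\in\mathfrak{R}_{22}$ and $[a_{11}+a_{22},\mathfrak{R}_{21}]=0$, then $a_{11}+a_{22}\in\mathcal{Z}(\mathfrak{R})$. Let $\mathcal{D}$ be a multiplicative Lie-type derivation of $\mathfrak{R}$. Then for any $a_{12}\in\mathfrak{R}_{12}$ and $b_{21}\in\mathfrak{R}_{21}$, $\mathcal{D}(a_{12}+b_{21})=\mathcal{D}(a_{12})+\mathcal{D}(b_{21})$.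
   Context: Rings are not assumed associative or unital. The associator is $(x,y,z)=(xy)z-x(yz)$; $\mathfrak{R}$ is alternative if $(x,x,y)=0=(y,x,x)$ for all $x,y$. $[x,y]=xy-yx$ and $\mathcal{Z}(\mathfrak{R})=\{r: [r,x]=0\ \forall x\in\mathfrak{R}\}$. Define $p_1(x)=x$, $p_n(x_1,\dots,x_n)=[p_{n-1}(x_1,\dots,x_{n-1}),x_n]$. For $n\ge2$, a (not necessarily additive) map $\mathcal{D}\colon\mathfrak{R}\to\mathfrak{R}$ is a multiplicative Lie $n$-derivation if $\mathcal{D}(p_n(x_1,\dots,x_n))=\sum_{i=1}^n p_n(x_1,\dots,\mathcal{D}(x_i),\dots,x_n)$ for all $x_i\in\mathfrak{R}$; a multiplicative Lie-type derivation is a multiplicative Lie $n$-derivation for some $n\ge2$. A nontrivial idempotent is $e_1\ne0$ with $e_1^2=e_1$ which is not a multiplicative identity. With $e_2a:=a-e_1a$, $ae_2:=a-ae_1$, set $\mathfrak{R}_{ij}=e_i\mathfrak{R}e_j$ ($i,j=1,2$), so $\mathfrak{R}=\bigoplus_{i,j}\mathfrak{R}_{ij}$. *)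

theory Defs
  imports Main
begin

definition nonassoc_ring :: "'a::{ab_group_add,times} itself \<Rightarrow> bool" where
  "nonassoc_ring _ \<longleftrightarrow>
     (\<forall>x y z::'a. x * (y + z) = x * y + x * z) \<and>
     (\<forall>x y z::'a. (x + y) * z = x * z + y * z)"

definition associator :: "'a::{ab_group_add,times} \<Rightarrow> 'a \<Rightarrow> 'a \<Rightarrow> 'a" where
  "associator x y z = (x * y) * z - x * (y * z)"

definition alternative_ring :: "'a::{ab_group_add,times} itself \<Rightarrow> bool" where
  "alternative_ring T \<longleftrightarrow> nonassoc_ring T \<and>
     (\<forall>x y::'a. associator x x y = 0 \<and> associator y x x = 0)"

definition commutator :: "'a::{ab_group_add,times} \<Rightarrow> 'a \<Rightarrow> 'a" where
  "commutator x y = x * y - y * x"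

definition center :: "'a::{ab_group_add,times} set" where
  "center = {r. \<forall>x. commutator r x = 0}"

text \<open>p_n(x_1,...,x_n): \<open>lie_poly x [x_2,...,x_n]\<close>, with n = length list + 1.\<close>
definition lie_poly :: "'a::{ab_group_add,times} \<Rightarrow> 'a list \<Rightarrow> 'a" where
  "lie_poly x ys = foldl commutator x ys"

definition mult_lie_n_derivation :: "nat \<Rightarrow> ('a::{ab_group_add,times} \<Rightarrow> 'a) \<Rightarrow> bool" where
  "mult_lie_n_derivation n D \<longleftrightarrow> 2 \<le> n \<and>
     (\<forall>x ys. length ys = n - 1 \<longrightarrow>
        D (lie_poly x ys) =
          lie_poly (D x) ys + (\<Sum>i<length ys. lie_poly x (ys[i := D (ys ! i)])))"

definition mult_lie_type_derivation :: "('a::{ab_group_add,times} \<Rightarrow> 'a) \<Rightarrow> bool" where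
  "mult_lie_type_derivation D \<longleftrightarrow> (\<exists>n\<ge>2. mult_lie_n_derivation n D)"

definition nontrivial_idempotent :: "'a::{ab_group_add,times} \<Rightarrow> bool" where
  "nontrivial_idempotent e \<longleftrightarrow> e \<noteq> 0 \<and> e * e = e \<and> \<not> (\<forall>x. e * x = x \<and> x * e = x)"

text \<open>Left/right multiplication by e_1 and by the formal e_2 = 1 - e_1.\<close>
definition eL :: "'a::{ab_group_add,times} \<Rightarrow> nat \<Rightarrow> 'a \<Rightarrow> 'a" where
  "eL e i a = (if i = 1 then e * a else a - e * a)"

definition eR :: "'a::{ab_group_add,times} \<Rightarrow> nat \<Rightarrow> 'a \<Rightarrow> 'a" where
  "eR e j a = (if j = 1 then a * e else a - a * e)"

text \<open>Peirce component R_ij = e_i R e_j (i, j \<in> {1,2}), read as (e_i a) e_j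
  (equal to e_i (a e_j) in an alternative ring by flexibility).\<close>
definition peirce :: "'a::{ab_group_add,times} \<Rightarrow> nat \<Rightarrow> nat \<Rightarrow> 'a set" where
  "peirce e i j = {eR e j (eL e i a) | a. True}"

end

theory Submission
  imports Defs
begin

(* With e = e1, b = b21 and a' = a12 or -a12 (depending on the parity of n), the Peirce
   relations give, for E = [e, ..., e] of length n - 2,
     p_n(e, a', E) = a12,   p_n(b, e, E) = b,   p_n(e, e, E) = 0,   p_n(b, a', E) = 0,
   the last one because [b, a'] lies in R11 + R22 and so commutes with e.  Hence
   p_n(e + b, e + a', E) = a12 + b.  Expanding D of this Lie polynomial slot by slot, the
   additivity defects D(x + y) - D x - D y only ever enter through Lie polynomials that vanish,
   which forces D(a12 + b) = D a12 + D b.  A Lie 2-derivation is a Lie 3-derivation, so n >= 3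
   may be assumed, which makes E nonempty. *)

lemma lie_poly_Nil [simp]: "lie_poly x [] = x"
  by (simp add: lie_poly_def)

lemma lie_poly_Cons: "lie_poly x (y # ys) = lie_poly (commutator x y) ys"
  by (simp add: lie_poly_def)

lemma commutator_self: "commutator x x = 0"
  by (simp add: commutator_def)

lemma lie_poly_replicate_fixed:
  assumes "commutator b e = b"
  shows "lie_poly b (replicate k e) = b"
  using assms by (induction k) (simp_all add: lie_poly_Cons)

context
  assumes nonassoc: "nonassoc_ring TYPE('a::{ab_group_add,times})"
begin

lemma nonassoc_distrib_left: "(x::'a) * (y + z) = x * y + x * z"
  using nonassoc unfolding nonassoc_ring_def by blast

lemma nonassoc_distrib_right: "((x::'a) + y) * z = x * z + y * z"
  using nonassoc unfolding nonassoc_ring_def by blast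

lemma nonassoc_mult_zero_right: "(x::'a) * 0 = 0"
  using nonassoc_distrib_left[of x 0 0] by simp

lemma nonassoc_mult_zero_left: "0 * (x::'a) = 0"
  using nonassoc_distrib_right[of 0 0 x] by simp

lemma nonassoc_mult_minus_right: "(x::'a) * (- y) = - (x * y)"
  using nonassoc_distrib_left[of x y "- y"]
  by (simp add: nonassoc_mult_zero_right eq_neg_iff_add_eq_0 add.commute)

lemma nonassoc_mult_minus_left: "(- x) * (y::'a) = - (x * y)"
  using nonassoc_distrib_right[of x "- x" y]
  by (simp add: nonassoc_mult_zero_left eq_neg_iff_add_eq_0 add.commute)

lemma nonassoc_diff_distrib_left: "(x::'a) * (y - z) = x * y - x * z"
  by (simp only: diff_conv_add_uminus nonassoc_distrib_left nonassoc_mult_minus_right)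

lemma nonassoc_diff_distrib_right: "((x::'a) - y) * z = x * z - y * z"
  by (simp only: diff_conv_add_uminus nonassoc_distrib_right nonassoc_mult_minus_left)

lemma commutator_add_left: "commutator ((x::'a) + y) z = commutator x z + commutator y z"
  unfolding commutator_def nonassoc_distrib_left nonassoc_distrib_right by simp

lemma commutator_add_right: "commutator (z::'a) (x + y) = commutator z x + commutator z y"
  unfolding commutator_def nonassoc_distrib_left nonassoc_distrib_right by simp

lemma commutator_diff_right: "commutator (z::'a) (x - y) = commutator z x - commutator z y"
  unfolding commutator_def nonassoc_diff_distrib_left nonassoc_diff_distrib_right by simp

lemma commutator_zero_left: "commutator 0 (x::'a) = 0"
  unfolding commutator_def nonassoc_mult_zero_left nonassoc_mult_zero_right by simp

lemma commutator_zero_right: "commutator (x::'a) 0 = 0"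
  unfolding commutator_def nonassoc_mult_zero_left nonassoc_mult_zero_right by simp

lemma lie_poly_add: "lie_poly ((x::'a) + y) zs = lie_poly x zs + lie_poly y zs"
  by (induction zs arbitrary: x y) (simp_all add: lie_poly_Cons commutator_add_left)

lemma lie_poly_zero: "lie_poly (0::'a) zs = 0"
  by (induction zs) (simp_all add: lie_poly_Cons commutator_zero_left)

lemma lie_poly_uminus: "lie_poly (- (x::'a)) zs = - lie_poly x zs"
  using lie_poly_add[of x "- x" zs] by (simp add: lie_poly_zero eq_neg_iff_add_eq_0 add.commute)

lemma lie_poly_diff: "lie_poly ((x::'a) - y) zs = lie_poly x zs - lie_poly y zs"
  by (simp only: diff_conv_add_uminus lie_poly_add lie_poly_uminus)

lemma lie_poly_Cons_add:
  "lie_poly x (((y::'a) + z) # zs) = lie_poly x (y # zs) + lie_poly x (z # zs)"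
  by (simp add: lie_poly_Cons commutator_add_right lie_poly_add)

lemma lie_poly_Cons_diff:
  "lie_poly x (((y::'a) - z) # zs) = lie_poly x (y # zs) - lie_poly x (z # zs)"
  by (simp add: lie_poly_Cons commutator_diff_right lie_poly_diff)

lemma lie_poly_replicate_negated:
  assumes "commutator a e = - (a::'a)"
  shows "lie_poly a (replicate k e) = (if even k then a else - a)"
  using assms by (induction k) (simp_all add: lie_poly_Cons lie_poly_uminus)

context
  fixes n :: nat and D :: "'a \<Rightarrow> 'a"
  assumes der: "mult_lie_n_derivation n D"
begin

lemma mult_lie_n_derivation_order: "2 \<le> n"
  using der unfolding mult_lie_n_derivation_def by simp

lemma mult_lie_n_derivationD:
  "length ys = n - 1 \<Longrightarrow>
    D (lie_poly x ys) = lie_poly (D x) ys + (\<Sum>i<length ys. lie_poly x (ys[i := D (ys ! i)]))"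
  using der unfolding mult_lie_n_derivation_def by blast

lemma mult_lie_n_derivation_Cons:
  assumes "length (w # ws) = n - 1"
  shows "D (lie_poly x (w # ws)) = lie_poly (D x) (w # ws) + lie_poly x (D w # ws)
           + (\<Sum>i<length ws. lie_poly x (w # ws[i := D (ws ! i)]))"
proof -
  have "(\<Sum>i<length (w # ws). lie_poly x ((w # ws)[i := D ((w # ws) ! i)]))
      = lie_poly x (D w # ws) + (\<Sum>i<length ws. lie_poly x (w # ws[i := D (ws ! i)]))"
    by (simp only: length_Cons sum.lessThan_Suc_shift) simp
  then show ?thesis
    using mult_lie_n_derivationD[OF assms, of x] by (simp add: add.assoc)
qed

lemma mult_lie_n_derivation_zero: "D 0 = 0"
proof -
  have "n - 1 = Suc (n - 2)"
    using mult_lie_n_derivation_order by arith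
  then have "length (0 # replicate (n - 2) 0) = n - 1"
    by simp
  from mult_lie_n_derivation_Cons[OF this, of 0] show ?thesis
    by (simp add: lie_poly_Cons lie_poly_zero commutator_zero_left commutator_zero_right)
qed

lemma mult_lie_n_derivation_defect_left:
  assumes "length zs = n - 1"
  shows "D (lie_poly (x1 + x2) zs) - D (lie_poly x1 zs) - D (lie_poly x2 zs)
           = lie_poly (D (x1 + x2) - D x1 - D x2) zs"
  using mult_lie_n_derivationD[OF assms, of "x1 + x2"] mult_lie_n_derivationD[OF assms, of x1]
    mult_lie_n_derivationD[OF assms, of x2]
  by (simp add: lie_poly_add lie_poly_diff sum.distrib)

lemma mult_lie_n_derivation_defect_head:
  assumes "length (w # ws) = n - 1"
  shows "D (lie_poly x ((w1 + w2) # ws)) - D (lie_poly x (w1 # ws)) - D (lie_poly x (w2 # ws))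
           = lie_poly x ((D (w1 + w2) - D w1 - D w2) # ws)"
proof -
  have len: "length (v # ws) = n - 1" for v
    using assms by simp
  show ?thesis
    using mult_lie_n_derivation_Cons[OF len, of x "w1 + w2"]
      mult_lie_n_derivation_Cons[OF len, of x w1] mult_lie_n_derivation_Cons[OF len, of x w2]
    by (simp add: lie_poly_Cons_add lie_poly_Cons_diff sum.distrib)
qed

lemma mult_lie_n_derivation_defect_left_vanishes:
  assumes "length zs = n - 1" and "lie_poly x1 zs = 0 \<or> lie_poly x2 zs = 0"
  shows "lie_poly (D (x1 + x2) - D x1 - D x2) zs = 0"
  using mult_lie_n_derivation_defect_left[OF assms(1), of x1 x2] assms(2)
  by (auto simp: lie_poly_add mult_lie_n_derivation_zero)

lemma mult_lie_n_derivation_defect_head_vanishes: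
  assumes "length (w # ws) = n - 1" and "lie_poly x (w1 # ws) = 0 \<or> lie_poly x (w2 # ws) = 0"
  shows "lie_poly x ((D (w1 + w2) - D w1 - D w2) # ws) = 0"
  using mult_lie_n_derivation_defect_head[OF assms(1), of x w1 w2] assms(2)
  by (auto simp: lie_poly_Cons_add mult_lie_n_derivation_zero)

lemma mult_lie_n_derivation_add_cross:
  assumes len: "length E = n - 2"
    and vanish1: "lie_poly x1 (y1 # E) = 0" and vanish2: "lie_poly x2 (y2 # E) = 0"
  shows "D (lie_poly x1 (y2 # E) + lie_poly x2 (y1 # E))
           = D (lie_poly x1 (y2 # E)) + D (lie_poly x2 (y1 # E))"
proof -
  have len_Cons: "length (v # E) = n - 1" for v
    using len mult_lie_n_derivation_order by simp
  have expand: "lie_poly (x1 + x2) ((y1 + y2) # E) = lie_poly x1 (y2 # E) + lie_poly x2 (y1 # E)"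
    using vanish1 vanish2 by (simp add: lie_poly_add lie_poly_Cons_add)
  have "lie_poly (D (x1 + x2) - D x1 - D x2) ((y1 + y2) # E) = 0"
    using mult_lie_n_derivation_defect_left_vanishes[OF len_Cons, of x1 y1 x2]
      mult_lie_n_derivation_defect_left_vanishes[OF len_Cons, of x1 y2 x2] vanish1 vanish2
    by (simp add: lie_poly_Cons_add)
  then have split_left: "D (lie_poly (x1 + x2) ((y1 + y2) # E))
      = D (lie_poly x1 ((y1 + y2) # E)) + D (lie_poly x2 ((y1 + y2) # E))"
    using mult_lie_n_derivation_defect_left[OF len_Cons, of x1 x2 "y1 + y2"]
    by (simp add: diff_eq_eq)
  have "D (lie_poly x1 ((y1 + y2) # E)) = D (lie_poly x1 (y2 # E))"
    using mult_lie_n_derivation_defect_head[OF len_Cons, of x1 y1 y2]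
      mult_lie_n_derivation_defect_head_vanishes[OF len_Cons, of x1 y1 y2] vanish1
    by (simp add: mult_lie_n_derivation_zero)
  moreover have "D (lie_poly x2 ((y1 + y2) # E)) = D (lie_poly x2 (y1 # E))"
    using mult_lie_n_derivation_defect_head[OF len_Cons, of x2 y1 y2]
      mult_lie_n_derivation_defect_head_vanishes[OF len_Cons, of x2 y1 y2] vanish2
    by (simp add: mult_lie_n_derivation_zero)
  ultimately show ?thesis
    using split_left by (simp add: expand)
qed

end

lemma mult_lie_2_derivation_imp_3:
  assumes "mult_lie_n_derivation 2 (D::'a \<Rightarrow> 'a)"
  shows "mult_lie_n_derivation 3 D"
proof -
  have leibniz: "D (commutator x y) = commutator (D x) y + commutator x (D y)" for x y
    using mult_lie_n_derivationD[OF assms, of "[y]" x] by (simp add: lie_poly_Cons)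
  show ?thesis
    unfolding mult_lie_n_derivation_def
  proof (intro conjI allI impI)
    fix x and ys :: "'a list"
    assume "length ys = 3 - 1"
    then obtain y z where ys: "ys = [y, z]"
      by (auto simp: numeral_3_eq_3 length_Suc_conv)
    show "D (lie_poly x ys)
        = lie_poly (D x) ys + (\<Sum>i<length ys. lie_poly x (ys[i := D (ys ! i)]))"
      unfolding ys by (simp add: lie_poly_Cons leibniz commutator_add_left numeral_2_eq_2 add.assoc)
  qed simp
qed

lemma mult_lie_type_derivation_ex_ge_3:
  assumes "mult_lie_type_derivation (D::'a \<Rightarrow> 'a)"
  obtains n where "3 \<le> n" and "mult_lie_n_derivation n D"
proof -
  obtain n where "2 \<le> n" and der: "mult_lie_n_derivation n D"
    using assms unfolding mult_lie_type_derivation_def by blast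
  then consider "n = 2" | "3 \<le> n"
    by linarith
  then show ?thesis
    using that der mult_lie_2_derivation_imp_3 by cases auto
qed

context
  assumes left_alternative: "\<And>x y::'a. associator x x y = 0"
    and right_alternative: "\<And>x y::'a. associator x y y = 0"
begin

lemma associator_add_left: "associator ((x::'a) + y) z w = associator x z w + associator y z w"
  unfolding associator_def nonassoc_distrib_left nonassoc_distrib_right by simp

lemma associator_add_middle: "associator z ((x::'a) + y) w = associator z x w + associator z y w"
  unfolding associator_def nonassoc_distrib_left nonassoc_distrib_right by simp

lemma associator_add_right: "associator z w ((x::'a) + y) = associator z w x + associator z w y"
  unfolding associator_def nonassoc_distrib_left nonassoc_distrib_right by simp

lemma associator_swap_left: "associator (x::'a) y z = - associator y x z"
proof -
  have "associator (x + y) (x + y) z = 0"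
    by (rule left_alternative)
  then have "associator x y z + associator y x z = 0"
    unfolding associator_add_left associator_add_middle
    by (simp add: left_alternative add.commute)
  then show ?thesis
    by (simp add: eq_neg_iff_add_eq_0)
qed

lemma associator_swap_right: "associator z (x::'a) y = - associator z y x"
proof -
  have "associator z (x + y) (x + y) = 0"
    by (rule right_alternative)
  then have "associator z x y + associator z y x = 0"
    unfolding associator_add_middle associator_add_right
    by (simp add: right_alternative add.commute)
  then show ?thesis
    by (simp add: eq_neg_iff_add_eq_0)
qed

lemma associator_flexible: "associator (x::'a) y x = 0"
  using associator_swap_right[of x y x] left_alternative[of x y] by simp

lemma peirce_12_mult:
  assumes idem: "e * e = (e::'a)" and "a \<in> peirce e 1 2"
  shows "e * a = a" and "a * e = 0"
proof -
  obtain r where a: "a = e * r - (e * r) * e"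
    using assms(2) unfolding peirce_def eL_def eR_def by auto
  have "e * (e * r) = e * r"
    using left_alternative[of e r] idem by (simp add: associator_def)
  moreover have "e * ((e * r) * e) = (e * r) * e"
    using associator_flexible[of e "e * r"] \<open>e * (e * r) = e * r\<close>
    by (simp add: associator_def)
  moreover have "((e * r) * e) * e = (e * r) * e"
    using right_alternative[of "e * r" e] idem by (simp add: associator_def)
  ultimately show "e * a = a" and "a * e = 0"
    unfolding a nonassoc_diff_distrib_left nonassoc_diff_distrib_right by simp_all
qed

lemma peirce_21_mult:
  assumes idem: "e * e = (e::'a)" and "b \<in> peirce e 2 1"
  shows "b * e = b" and "e * b = 0"
proof -
  obtain r where b: "b = (r - e * r) * e"
    using assms(2) unfolding peirce_def eL_def eR_def by auto
  have "e * (r - e * r) = 0"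
    using left_alternative[of e r] idem by (simp add: associator_def nonassoc_diff_distrib_left)
  then show "b * e = b" and "e * b = 0"
    using right_alternative[of "r - e * r" e] associator_flexible[of e "r - e * r"] idem
    unfolding b by (simp_all add: associator_def nonassoc_mult_zero_left)
qed

lemma commutator_commutator_off_diagonal:
  assumes ea: "e * a = (a::'a)" and ae: "a * e = 0" and be: "b * e = b" and eb: "e * b = 0"
  shows "commutator (commutator b a) e = 0"
proof -
  have aeb: "associator a e b = 0"
    unfolding associator_def ae eb nonassoc_mult_zero_left nonassoc_mult_zero_right by simp
  have bea: "associator b e a = 0"
    unfolding associator_def be ea by simp
  have "(a * b) * e = a * b"
    using associator_swap_right[of a b e] aeb be by (simp add: associator_def)
  moreover have "e * (a * b) = a * b"
    using associator_swap_left[of e a b] aeb ea by (simp add: associator_def)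
  moreover have "(b * a) * e = 0"
    using associator_swap_right[of b a e] bea ae
    by (simp add: associator_def nonassoc_mult_zero_right)
  moreover have "e * (b * a) = 0"
    using associator_swap_left[of e b a] bea eb
    by (simp add: associator_def nonassoc_mult_zero_left)
  ultimately show ?thesis
    unfolding commutator_def nonassoc_diff_distrib_left nonassoc_diff_distrib_right by simp
qed

lemma off_diagonal_lie_poly_representation:
  assumes idem: "e * e = (e::'a)" and a: "a \<in> peirce e 1 2" and b: "b \<in> peirce e 2 1"
  obtains a' where "lie_poly e (a' # replicate (Suc k) e) = a"
    and "lie_poly b (e # replicate (Suc k) e) = b"
    and "lie_poly e (e # replicate (Suc k) e) = 0"
    and "lie_poly b (a' # replicate (Suc k) e) = 0"
proof
  define a' where "a' = (if even (Suc k) then a else - a)"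
  have "e * a = a" and "a * e = 0"
    using peirce_12_mult[OF idem a] by simp_all
  then have ea': "e * a' = a'" and a'e: "a' * e = 0"
    unfolding a'_def by (simp_all add: nonassoc_mult_minus_left nonassoc_mult_minus_right)
  have be: "b * e = b" and eb: "e * b = 0"
    using peirce_21_mult[OF idem b] by simp_all
  show "lie_poly e (a' # replicate (Suc k) e) = a"
    using lie_poly_replicate_negated[of a' e "Suc k"] ea' a'e
    by (simp only: lie_poly_Cons) (simp add: commutator_def a'_def)
  show "lie_poly b (e # replicate (Suc k) e) = b"
    using lie_poly_replicate_fixed[of b e] be eb by (simp add: lie_poly_Cons commutator_def)
  show "lie_poly e (e # replicate (Suc k) e) = 0"
    by (simp only: lie_poly_Cons commutator_self lie_poly_zero)
  show "lie_poly b (a' # replicate (Suc k) e) = 0"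
    using commutator_commutator_off_diagonal[OF ea' a'e be eb]
    by (simp add: lie_poly_Cons lie_poly_zero)
qed

end

end

lemma alternative_ringD:
  assumes "alternative_ring TYPE('a::{ab_group_add,times})"
  shows "nonassoc_ring TYPE('a)" and "associator (x::'a) x y = 0" and "associator (x::'a) y y = 0"
  using assms unfolding alternative_ring_def by blast+

theorem lemma2p3:
  fixes e1 :: "'a::{ab_group_add,times}" and D :: "'a \<Rightarrow> 'a"
  assumes alt: "alternative_ring TYPE('a)"
    and idem: "nontrivial_idempotent e1"
    and cond1: "\<And>a11 a22. a11 \<in> peirce e1 1 1 \<Longrightarrow> a22 \<in> peirce e1 2 2 \<Longrightarrow>
                 (\<forall>x\<in>peirce e1 1 2. commutator (a11 + a22) x = 0) \<Longrightarrow> a11 + a22 \<in> center"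
    and cond2: "\<And>a11 a22. a11 \<in> peirce e1 1 1 \<Longrightarrow> a22 \<in> peirce e1 2 2 \<Longrightarrow>
                 (\<forall>x\<in>peirce e1 2 1. commutator (a11 + a22) x = 0) \<Longrightarrow> a11 + a22 \<in> center"
    and der: "mult_lie_type_derivation D"
    and a: "a12 \<in> peirce e1 1 2"
    and b: "b21 \<in> peirce e1 2 1"
  shows "D (a12 + b21) = D a12 + D b21"
proof -
  note ring = alternative_ringD[OF alt]
  have e1: "e1 * e1 = e1"
    using idem unfolding nontrivial_idempotent_def by simp
  obtain n where "3 \<le> n" and der_n: "mult_lie_n_derivation n D"
    using mult_lie_type_derivation_ex_ge_3[OF ring(1) der] by blast
  then obtain k where k: "n - 2 = Suc k"
    using that[of "n - 3"] by arith
  obtain a' where "lie_poly e1 (a' # replicate (Suc k) e1) = a12"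
    and "lie_poly b21 (e1 # replicate (Suc k) e1) = b21"
    and "lie_poly e1 (e1 # replicate (Suc k) e1) = 0"
    and "lie_poly b21 (a' # replicate (Suc k) e1) = 0"
    using off_diagonal_lie_poly_representation[OF ring e1 a b] by blast
  then show ?thesis
    using mult_lie_n_derivation_add_cross[OF ring(1) der_n, of "replicate (Suc k) e1" e1 e1 b21 a']
    by (simp add: k)
qed

end
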